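(* The monic irreducible polynomials over the sign hyperfield $\mathbb S$ are exactly $T$, $T-1$, $T+1$ and $T^2+1$. Consequently every irreducible polynomial over $\mathbb S$ is $\pm$ one of these.
   Context: The sign hyperfield $\mathbb S$ is $\{0,1,-1\}$ with the usual multiplication and hyperaddition $0\boxplus a=\{a\}$, $1\boxplus1=\{1\}$, $(-1)\boxplus(-1)=\{-1\}$, $1\boxplus(-1)=\{0,1,-1\}$. Iterated sums: $\boxplus_{i=1}^n a_i=\bigcup_{b\in\boxplus_{i=1}^{n-1}a_i} b\boxplus a_n$. A polynomial over $\mathbb S$ is a finitely supported sequence $(c_i)$ in $\mathbb S$, written $\sum c_iT^i$, of degree the largest $k$ with $c_k\ne0$; monic means $c_{\deg p}=1$. Hyperproduct: $p\boxdot q=\{\sum e_iT^i : e_i\in \boxplus_{k+l=i} c_kd_l\}$. $p\sim q$ means $p\in a\boxdot q$ for some $a\in\{\pm1\}$. $p$ is irreducible if $\deg p\ge1$ and $p\in q_1\boxdot q_2$ implies $p\sim q_1$ or $p\sim q_2$. *)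

theory Defs
  imports Main
begin

text \<open>The sign hyperfield S = {0, 1, -1}.\<close>
datatype sgn = SZ | SP | SN

fun smul :: "sgn \<Rightarrow> sgn \<Rightarrow> sgn" where
  "smul SZ b = SZ"
| "smul a SZ = SZ"
| "smul SP b = b"
| "smul SN SP = SN"
| "smul SN SN = SP"

fun hadd :: "sgn \<Rightarrow> sgn \<Rightarrow> sgn set" where
  "hadd SZ b = {b}"
| "hadd a SZ = {a}"
| "hadd SP SP = {SP}"
| "hadd SN SN = {SN}"
| "hadd SP SN = {SZ, SP, SN}"
| "hadd SN SP = {SZ, SP, SN}"

text \<open>Iterated hypersum of a list a_1,...,a_n:
  sum_{i=1}^n a_i = union over b in sum_{i=1}^{n-1} a_i of b + a_n (empty sum = {0}).\<close>
fun hsum_rev :: "sgn list \<Rightarrow> sgn set" where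
  "hsum_rev [] = {SZ}"
| "hsum_rev (a # xs) = (\<Union>b\<in>hsum_rev xs. hadd b a)"

definition hsum :: "sgn list \<Rightarrow> sgn set" where
  "hsum xs = hsum_rev (rev xs)"

definition spoly :: "(nat \<Rightarrow> sgn) set" where
  "spoly = {c. finite {i. c i \<noteq> SZ}}"

definition sdeg :: "(nat \<Rightarrow> sgn) \<Rightarrow> nat" where
  "sdeg c = (if {i. c i \<noteq> SZ} = {} then 0 else Max {i. c i \<noteq> SZ})"

definition smonic :: "(nat \<Rightarrow> sgn) \<Rightarrow> bool" where
  "smonic c \<longleftrightarrow> c (sdeg c) = SP"

definition shprod :: "(nat \<Rightarrow> sgn) \<Rightarrow> (nat \<Rightarrow> sgn) \<Rightarrow> (nat \<Rightarrow> sgn) set" where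
  "shprod c d = {e. e \<in> spoly \<and>
     (\<forall>i. e i \<in> hsum (map (\<lambda>k. smul (c k) (d (i - k))) [0..<Suc i]))}"

definition sconst :: "sgn \<Rightarrow> (nat \<Rightarrow> sgn)" where
  "sconst a = (\<lambda>i. if i = 0 then a else SZ)"

definition ssim :: "(nat \<Rightarrow> sgn) \<Rightarrow> (nat \<Rightarrow> sgn) \<Rightarrow> bool" where
  "ssim p q \<longleftrightarrow> (\<exists>a\<in>{SP, SN}. p \<in> shprod (sconst a) q)"

definition sirred :: "(nat \<Rightarrow> sgn) \<Rightarrow> bool" where
  "sirred p \<longleftrightarrow> p \<in> spoly \<and> sdeg p \<ge> 1 \<and>
     (\<forall>q1\<in>spoly. \<forall>q2\<in>spoly. p \<in> shprod q1 q2 \<longrightarrow> ssim p q1 \<or> ssim p q2)"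

definition polyT :: "nat \<Rightarrow> sgn" where
  "polyT = (\<lambda>i. if i = 1 then SP else SZ)"
definition polyTm1 :: "nat \<Rightarrow> sgn" where
  "polyTm1 = (\<lambda>i. if i = 1 then SP else if i = 0 then SN else SZ)"
definition polyTp1 :: "nat \<Rightarrow> sgn" where
  "polyTp1 = (\<lambda>i. if i = 1 then SP else if i = 0 then SP else SZ)"
definition polyT2p1 :: "nat \<Rightarrow> sgn" where
  "polyT2p1 = (\<lambda>i. if i = 2 then SP else if i = 0 then SP else SZ)"

end

theory Submission
  imports Defs
begin

text \<open>
  A hypersum in the sign hyperfield only depends on which nonzero signs occur among the
  summands: it is the full hyperfield as soon as both signs occur.  Hence a coefficient of a
  hyperproduct is unconstrained whenever two of its contributing products have opposite signs.
  With this, every monic polynomial of degree \<open>n \<ge> 2\<close> other than \<open>T\<^sup>2 + 1\<close> has a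
  factorisation into two factors of degree \<open>< n\<close>: by \<open>T\<close> if its constant term is \<open>0\<close>,
  by \<open>T - 1\<close> and \<open>1 + T + \<dots> + T\<^sup>n\<^sup>-\<^sup>1\<close> if it is \<open>-1\<close>, and if it is \<open>+1\<close>
  by \<open>T + 1\<close> and an alternating polynomial (\<open>n\<close> odd), by \<open>1 + T + T\<^sup>2\<close> and an
  alternating polynomial (\<open>n \<ge> 4\<close> even), or by \<open>(T \<plusminus> 1)\<^sup>2\<close> (\<open>n = 2\<close>).  Degree one
  polynomials are irreducible because degrees add, and \<open>T\<^sup>2 + 1\<close> is irreducible because
  the middle coefficient of a product of two linear factors can only be \<open>0\<close> when the
  constant term is negative.  Negation reduces the general case to the monic one.
\<close>

section \<open>Sign arithmetic\<close>

lemma UNIV_sgn: "UNIV = {SZ, SP, SN}"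
  by (auto intro: sgn.exhaust)

lemma smul_commute: "smul a b = smul b a"
  by (cases a; cases b) auto

lemma smul_SZ_right [simp]: "smul a SZ = SZ"
  by (cases a) auto

lemma smul_SP_left [simp]: "smul SP b = b"
  by (cases b) auto

lemma smul_eq_SZ_iff: "smul a b = SZ \<longleftrightarrow> a = SZ \<or> b = SZ"
  by (cases a; cases b) auto

lemma smul_eq_SP_iff: "smul a b = SP \<longleftrightarrow> a = b \<and> a \<noteq> SZ"
  by (cases a; cases b) auto

lemma smul_SN_SN_left [simp]: "smul SN (smul SN x) = x"
  by (cases x) auto

lemma smul_SN_eq_iff [simp]:
  "smul SN y = SP \<longleftrightarrow> y = SN" "smul SN y = SN \<longleftrightarrow> y = SP" "smul SN y = SZ \<longleftrightarrow> y = SZ"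
  by (cases y; simp)+

lemma smul_SN_left_commute: "smul a (smul SN x) = smul SN (smul a x)"
  by (cases a; cases x) auto

definition hsum_set :: "sgn set \<Rightarrow> sgn set" where
  "hsum_set S = (if SP \<in> S \<and> SN \<in> S then UNIV else if SP \<in> S then {SP}
                 else if SN \<in> S then {SN} else {SZ})"

lemma hsum_set_insert: "(\<Union>b\<in>hsum_set S. hadd b a) = hsum_set (insert a S)"
  by (cases a) (auto simp: hsum_set_def UNIV_sgn)

lemma hsum_rev_eq_hsum_set: "hsum_rev xs = hsum_set (set xs)"
  by (induction xs) (simp add: hsum_set_def, simp add: hsum_set_insert)

lemma hsum_eq_hsum_set: "hsum xs = hsum_set (set xs)"
  by (simp add: hsum_def hsum_rev_eq_hsum_set)

lemma hsum_set_cong: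
  "(SP \<in> A \<longleftrightarrow> SP \<in> B) \<Longrightarrow> (SN \<in> A \<longleftrightarrow> SN \<in> B) \<Longrightarrow> hsum_set A = hsum_set B"
  by (simp add: hsum_set_def)

lemma hsum_set_insert_SZ [simp]: "hsum_set (insert SZ S) = hsum_set S"
  by (simp add: hsum_set_def)

lemma hsum_set_singleton [simp]: "hsum_set {x} = {x}"
  by (cases x) (auto simp: hsum_set_def)

lemma hsum_set_smul_SN:
  assumes "x \<in> hsum_set S"
  shows "smul SN x \<in> hsum_set (smul SN ` S)"
proof -
  have "SP \<in> smul SN ` S \<longleftrightarrow> SN \<in> S" "SN \<in> smul SN ` S \<longleftrightarrow> SP \<in> S"
    by (auto simp: image_iff) (metis smul_SN_eq_iff)+
  with assms show ?thesis
    unfolding hsum_set_def by (cases x) (auto split: if_splits)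
qed

section \<open>Polynomials and degrees\<close>

lemma spolyI: "\<forall>i>N. q i = SZ \<Longrightarrow> q \<in> spoly"
  unfolding spoly_def
  by (rule CollectI, rule finite_subset[of _ "{..N}"]) (auto simp: not_le[symmetric])

lemma coeff_above_sdeg: "c \<in> spoly \<Longrightarrow> sdeg c < i \<Longrightarrow> c i = SZ"
proof (rule ccontr)
  assume c: "c \<in> spoly" "sdeg c < i" "c i \<noteq> SZ"
  then have "i \<le> Max {i. c i \<noteq> SZ}"
    by (intro Max_ge) (auto simp: spoly_def)
  with c show False
    unfolding sdeg_def by (auto split: if_splits)
qed

lemma lead_coeff_nonzero: "c \<in> spoly \<Longrightarrow> c i \<noteq> SZ \<Longrightarrow> c (sdeg c) \<noteq> SZ"
proof -
  assume c: "c \<in> spoly" "c i \<noteq> SZ"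
  then have "finite {i. c i \<noteq> SZ}" "{i. c i \<noteq> SZ} \<noteq> {}"
    by (auto simp: spoly_def)
  then have "Max {i. c i \<noteq> SZ} \<in> {i. c i \<noteq> SZ}"
    by (rule Max_in)
  then show ?thesis
    unfolding sdeg_def by auto
qed

lemma lead_coeff_nonzero_if_sdeg_pos: "c \<in> spoly \<Longrightarrow> 1 \<le> sdeg c \<Longrightarrow> c (sdeg c) \<noteq> SZ"
  using lead_coeff_nonzero[of c] unfolding sdeg_def by (auto split: if_splits)

lemma sdeg_eqI: "c n \<noteq> SZ \<Longrightarrow> \<forall>i>n. c i = SZ \<Longrightarrow> sdeg c = n"
proof -
  assume c: "c n \<noteq> SZ" "\<forall>i>n. c i = SZ"
  have "Max {i. c i \<noteq> SZ} = n"
    by (rule Max_eqI) (use c spolyI[of n c] in \<open>auto simp: spoly_def not_le[symmetric]\<close>)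
  with c show ?thesis
    unfolding sdeg_def by auto
qed

lemma sdeg_0_imp_sconst: "c \<in> spoly \<Longrightarrow> sdeg c = 0 \<Longrightarrow> c = sconst (c 0)"
  by (rule ext) (auto simp: sconst_def intro: coeff_above_sdeg)

section \<open>The hyperproduct\<close>

lemma shprod_iff:
  "e \<in> shprod c d \<longleftrightarrow> e \<in> spoly \<and> (\<forall>i. e i \<in> hsum_set ((\<lambda>k. smul (c k) (d (i - k))) ` {..i}))"
  unfolding shprod_def hsum_eq_hsum_set set_map set_upt atLeast0LessThan lessThan_Suc_atMost
  by simp

lemma image_diff_atMost: "(\<lambda>k. i - k) ` {..i::nat} = {..i}"
proof (intro equalityI subsetI)
  fix x :: nat assume "x \<in> {..i}"
  then have "x = i - (i - x)" "i - x \<in> {..i}"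
    by auto
  then show "x \<in> (\<lambda>k. i - k) ` {..i}"
    by blast
qed auto

lemma shprod_commute: "shprod c d = shprod d c"
proof -
  have "(\<lambda>k. smul (d k) (c (i - k))) ` {..i} = (\<lambda>k. smul (c k) (d (i - k))) ` {..i}" for i
  proof -
    have "(\<lambda>k. smul (d k) (c (i - k))) ` {..i}
        = (\<lambda>k. smul (c k) (d (i - k))) ` (\<lambda>k. i - k) ` {..i}"
      unfolding image_image by (rule image_cong) (auto simp: smul_commute)
    then show ?thesis
      by (simp only: image_diff_atMost)
  qed
  then show ?thesis
    by (intro set_eqI) (simp only: shprod_iff)
qed

lemma shprod_iff_bounded:
  assumes "\<forall>k>m. f k = SZ"
  shows "e \<in> shprod f q \<longleftrightarrow> e \<in> spoly \<and>
           (\<forall>i. e i \<in> hsum_set ((\<lambda>k. smul (f k) (q (i - k))) ` {..min i m}))"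
proof -
  have "hsum_set ((\<lambda>k. smul (f k) (q (i - k))) ` {..i})
      = hsum_set ((\<lambda>k. smul (f k) (q (i - k))) ` {..min i m})" for i
  proof -
    have "v \<in> (\<lambda>k. smul (f k) (q (i - k))) ` {..i} \<longleftrightarrow>
          v \<in> (\<lambda>k. smul (f k) (q (i - k))) ` {..min i m}" if "v \<noteq> SZ" for v
    proof
      assume "v \<in> (\<lambda>k. smul (f k) (q (i - k))) ` {..i}"
      then obtain k where k: "k \<le> i" "v = smul (f k) (q (i - k))"
        by auto
      with that assms have "k \<le> m"
        by (metis leI smul.simps(1))
      with k show "v \<in> (\<lambda>k. smul (f k) (q (i - k))) ` {..min i m}"
        by auto
    qed auto
    then show ?thesis
      by (intro hsum_set_cong) simp_all
  qed
  then show ?thesis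
    unfolding shprod_iff by simp
qed

lemma forall_nat_split: "(\<forall>i::nat. P i) \<longleftrightarrow> P 0 \<and> (\<forall>i. P (Suc i))"
  by (metis not0_implies_Suc)

lemma shprod_const_iff:
  assumes "\<forall>k>0. f k = SZ"
  shows "e \<in> shprod f q \<longleftrightarrow> e \<in> spoly \<and> (\<forall>i. e i = smul (f 0) (q i))"
  using shprod_iff_bounded[OF assms] by simp

lemma shprod_linear_iff:
  assumes "\<forall>k>1. f k = SZ"
  shows "e \<in> shprod f q \<longleftrightarrow> e \<in> spoly \<and> e 0 = smul (f 0) (q 0) \<and>
           (\<forall>i. e (Suc i) \<in> hsum_set {smul (f 0) (q (Suc i)), smul (f 1) (q i)})"
proof -
  have "{..min (Suc i) 1} = {0, 1::nat}" for i
    by auto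
  then show ?thesis
    using shprod_iff_bounded[OF assms, of e q] forall_nat_split[of "\<lambda>i. e i \<in> _ i"] by simp
qed

lemma shprod_quadratic_iff:
  assumes "\<forall>k>2. f k = SZ"
  shows "e \<in> shprod f q \<longleftrightarrow> e \<in> spoly \<and> e 0 = smul (f 0) (q 0) \<and>
           e 1 \<in> hsum_set {smul (f 0) (q 1), smul (f 1) (q 0)} \<and>
           (\<forall>i. e (Suc (Suc i)) \<in>
                  hsum_set {smul (f 0) (q (Suc (Suc i))), smul (f 1) (q (Suc i)), smul (f 2) (q i)})"
proof -
  have "{..min (Suc (Suc i)) 2} = {0, 1, 2::nat}" for i
    by auto
  moreover have "{..min (Suc 0) 2} = {0, 1::nat}"
    by auto
  ultimately show ?thesis
    using shprod_iff_bounded[OF assms, of e q] forall_nat_split[of "\<lambda>i. e i \<in> _ i"]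
      forall_nat_split[of "\<lambda>i. e (Suc i) \<in> _ i"]
    by (simp add: numeral_2_eq_2)
qed

lemma shprod_nonzero_factor:
  assumes "e \<in> shprod c d" "e i \<noteq> SZ"
  shows "\<exists>j. c j \<noteq> SZ"
proof (rule ccontr)
  assume "\<not> (\<exists>j. c j \<noteq> SZ)"
  then show False
    using assms shprod_const_iff[of c e d] by simp
qed

lemma sdeg_shprod:
  assumes c: "c \<in> spoly" and d: "d \<in> spoly" and e: "e \<in> shprod c d" "e j \<noteq> SZ"
  shows "sdeg e = sdeg c + sdeg d"
proof (rule sdeg_eqI)
  let ?a = "sdeg c" and ?b = "sdeg d"
  let ?terms = "\<lambda>i. (\<lambda>k. smul (c k) (d (i - k))) ` {..i}"
  have "c ?a \<noteq> SZ" "d ?b \<noteq> SZ"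
    using e shprod_nonzero_factor shprod_commute lead_coeff_nonzero c d by metis+
  then have lead: "smul (c ?a) (d ?b) \<noteq> SZ"
    by (simp add: smul_eq_SZ_iff)
  have E: "e i \<in> hsum_set (?terms i)" for i
    using e shprod_iff by blast
  have vanish: "smul (c k) (d (i - k)) = SZ"
    if "?a + ?b \<le> i" "k \<noteq> ?a \<or> i \<noteq> ?a + ?b" for k i
  proof (cases "k \<le> ?a")
    case True
    with that have "?b < i - k"
      by auto
    then show ?thesis
      using coeff_above_sdeg[OF d] by simp
  next
    case False
    then show ?thesis
      using coeff_above_sdeg[OF c] by simp
  qed
  have "?terms (?a + ?b) \<subseteq> {SZ, smul (c ?a) (d ?b)}"
  proof
    fix x assume "x \<in> ?terms (?a + ?b)"
    then obtain k where "x = smul (c k) (d (?a + ?b - k))"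
      by blast
    then show "x \<in> {SZ, smul (c ?a) (d ?b)}"
      using vanish[where k = k and i = "?a + ?b"] by (cases "k = ?a") auto
  qed
  moreover have "smul (c ?a) (d ?b) \<in> ?terms (?a + ?b)"
    by (rule image_eqI[of _ _ ?a]) auto
  ultimately have "hsum_set (?terms (?a + ?b)) = {smul (c ?a) (d ?b)}"
    by (cases "smul (c ?a) (d ?b)") (auto simp: hsum_set_def)
  with E[of "?a + ?b"] lead show "e (?a + ?b) \<noteq> SZ"
    by auto
  show "\<forall>i > ?a + ?b. e i = SZ"
  proof (intro allI impI)
    fix i assume "?a + ?b < i"
    then have "?terms i = {SZ}"
      using vanish by auto
    then show "e i = SZ"
      using E[of i] by simp
  qed
qed

section \<open>Associates and irreducibility\<close>

definition sneg :: "(nat \<Rightarrow> sgn) \<Rightarrow> nat \<Rightarrow> sgn" where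
  "sneg p = (\<lambda>i. smul SN (p i))"

lemma sneg_sneg [simp]: "sneg (sneg p) = p"
  by (simp add: sneg_def)

lemma sneg_support: "{i. sneg p i \<noteq> SZ} = {i. p i \<noteq> SZ}"
  by (simp add: sneg_def)

lemma sneg_spoly: "p \<in> spoly \<Longrightarrow> sneg p \<in> spoly"
  unfolding spoly_def using sneg_support by simp

lemma sdeg_sneg [simp]: "sdeg (sneg p) = sdeg p"
  unfolding sdeg_def sneg_support ..

lemma ssim_iff: "ssim p q \<longleftrightarrow> p \<in> spoly \<and> (p = q \<or> p = sneg q)"
proof -
  have "\<forall>k>0. sconst a k = SZ" for a
    by (simp add: sconst_def)
  then show ?thesis
    unfolding ssim_def using shprod_const_iff by (auto simp: sconst_def sneg_def fun_eq_iff)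
qed

lemma ssim_coeff_SZ: "ssim p q \<Longrightarrow> q n = SZ \<Longrightarrow> p n = SZ"
  by (auto simp: ssim_iff sneg_def)

lemma ssim_if_sdeg_0_factor:
  assumes "q1 \<in> spoly" "q1 0 \<noteq> SZ" "sdeg q1 = 0" "p \<in> shprod q1 q2"
  shows "ssim p q2"
proof -
  have "q1 = sconst (q1 0)"
    using sdeg_0_imp_sconst assms by blast
  moreover have "q1 0 \<in> {SP, SN}"
    using assms(2) by (cases "q1 0") auto
  ultimately show ?thesis
    unfolding ssim_def using assms(4) by metis
qed

lemma sirredI:
  assumes p: "p \<in> spoly" "1 \<le> sdeg p"
    and no_proper_factors: "\<And>q1 q2. q1 \<in> spoly \<Longrightarrow> q2 \<in> spoly \<Longrightarrow> p \<in> shprod q1 q2 \<Longrightarrow>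
                              1 \<le> sdeg q1 \<Longrightarrow> 1 \<le> sdeg q2 \<Longrightarrow> False"
  shows "sirred p"
  unfolding sirred_def
proof (intro conjI ballI impI)
  fix q1 q2 assume q: "q1 \<in> spoly" "q2 \<in> spoly" "p \<in> shprod q1 q2"
  have "p (sdeg p) \<noteq> SZ"
    using lead_coeff_nonzero_if_sdeg_pos p by blast
  then have "q1 (sdeg q1) \<noteq> SZ" "q2 (sdeg q2) \<noteq> SZ"
    using q shprod_nonzero_factor shprod_commute lead_coeff_nonzero by metis+
  then show "ssim p q1 \<or> ssim p q2"
    using q no_proper_factors ssim_if_sdeg_0_factor[of q1 p q2] ssim_if_sdeg_0_factor[of q2 p q1]
    by (metis shprod_commute less_one not_le)
qed (use p in auto)

lemma not_sirred_if_factors_vanish: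
  assumes "q1 \<in> spoly" "q2 \<in> spoly" "p \<in> shprod q1 q2" "q1 n = SZ" "q2 n = SZ" "p n \<noteq> SZ"
  shows "\<not> sirred p"
  using assms ssim_coeff_SZ unfolding sirred_def by blast

lemma smonic_sneg_iff: "smonic (sneg p) \<longleftrightarrow> p (sdeg p) = SN"
  by (simp add: smonic_def) (simp add: sneg_def)

lemma shprod_sneg_right: "e \<in> shprod c d \<Longrightarrow> sneg e \<in> shprod c (sneg d)"
proof -
  assume e: "e \<in> shprod c d"
  have "(\<lambda>k. smul (c k) (sneg d (i - k))) ` {..i} = smul SN ` (\<lambda>k. smul (c k) (d (i - k))) ` {..i}"
    for i
    unfolding image_image sneg_def by (rule image_cong) (rule refl, rule smul_SN_left_commute)
  with e show ?thesis
    using sneg_spoly hsum_set_smul_SN unfolding shprod_iff by (simp add: sneg_def)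
qed

lemma sneg_eq_iff: "sneg p = q \<longleftrightarrow> p = sneg q"
  by (metis sneg_sneg)

lemma ssim_sneg_iff: "ssim (sneg p) q \<longleftrightarrow> ssim p q"
  using sneg_spoly[of p] sneg_spoly[of "sneg p"] by (auto simp: ssim_iff sneg_eq_iff)

lemma ssim_sneg_right_iff: "ssim p (sneg q) \<longleftrightarrow> ssim (sneg p) q"
  using sneg_spoly[of p] sneg_spoly[of "sneg p"] by (auto simp: ssim_iff sneg_eq_iff)

lemma sirred_sneg: "sirred p \<Longrightarrow> sirred (sneg p)"
  unfolding sirred_def
proof (intro conjI ballI impI)
  assume p: "p \<in> spoly \<and> 1 \<le> sdeg p \<and>
    (\<forall>q1\<in>spoly. \<forall>q2\<in>spoly. p \<in> shprod q1 q2 \<longrightarrow> ssim p q1 \<or> ssim p q2)"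
  fix q1 q2 assume q: "q1 \<in> spoly" "q2 \<in> spoly" "sneg p \<in> shprod q1 q2"
  then have "p \<in> shprod q1 (sneg q2)"
    using shprod_sneg_right by fastforce
  then have "ssim p q1 \<or> ssim p (sneg q2)"
    using p q sneg_spoly by blast
  then show "ssim (sneg p) q1 \<or> ssim (sneg p) q2"
    by (simp add: ssim_sneg_iff ssim_sneg_right_iff)
qed (use sneg_spoly in auto)

section \<open>Irreducible polynomials\<close>

definition slinear :: "sgn \<Rightarrow> nat \<Rightarrow> sgn" where
  "slinear a = (\<lambda>i. if i = 1 then SP else if i = 0 then a else SZ)"

lemma slinear_spoly [simp]: "slinear a \<in> spoly"
  by (rule spolyI[of 1]) (simp add: slinear_def)

lemma sdeg_slinear [simp]: "sdeg (slinear a) = 1"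
  by (rule sdeg_eqI) (auto simp: slinear_def)

lemma polyT_eq_slinear: "polyT = slinear SZ" "polyTm1 = slinear SN" "polyTp1 = slinear SP"
  by (auto simp: fun_eq_iff slinear_def polyT_def polyTm1_def polyTp1_def)

lemma slinear_cases: "slinear a \<in> {polyT, polyTm1, polyTp1}"
  by (cases a) (simp_all add: polyT_eq_slinear)

lemma monic_sdeg_1_eq_slinear:
  assumes "p \<in> spoly" "smonic p" "sdeg p = 1"
  shows "p = slinear (p 0)"
proof
  fix i
  show "p i = slinear (p 0) i"
    using assms coeff_above_sdeg[OF assms(1)] unfolding smonic_def slinear_def
    by (cases "i \<le> 1") (auto simp: le_Suc_eq)
qed

lemma sirred_sdeg_1:
  assumes p: "p \<in> spoly" "sdeg p = 1"
  shows "sirred p"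
proof (rule sirredI)
  fix q1 q2
  assume q: "q1 \<in> spoly" "q2 \<in> spoly" "p \<in> shprod q1 q2" "1 \<le> sdeg q1" "1 \<le> sdeg q2"
  have "p (sdeg p) \<noteq> SZ"
    using lead_coeff_nonzero_if_sdeg_pos[OF p(1)] p(2) by simp
  then have "sdeg p = sdeg q1 + sdeg q2"
    by (rule sdeg_shprod[OF q(1-3)])
  with p q show False
    by simp
qed (use p in auto)

lemma sirred_polyT2p1: "sirred polyT2p1"
proof (rule sirredI)
  show "polyT2p1 \<in> spoly"
    by (rule spolyI[of 2]) (simp add: polyT2p1_def)
  have deg: "sdeg polyT2p1 = 2"
    by (rule sdeg_eqI) (auto simp: polyT2p1_def)
  then show "1 \<le> sdeg polyT2p1"
    by simp
  fix q1 q2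
  assume q: "q1 \<in> spoly" "q2 \<in> spoly" "polyT2p1 \<in> shprod q1 q2" "1 \<le> sdeg q1" "1 \<le> sdeg q2"
  have "sdeg q1 + sdeg q2 = 2"
    using sdeg_shprod[OF q(1-3), of 0] deg by (simp add: polyT2p1_def)
  with q have "sdeg q1 = 1" "sdeg q2 = 1"
    by auto
  then have q1_linear: "\<forall>k>1. q1 k = SZ" and "q2 2 = SZ"
    using coeff_above_sdeg q(1,2) by simp_all
  have coeffs: "polyT2p1 0 = smul (q1 0) (q2 0)"
      "polyT2p1 1 \<in> hsum_set {smul (q1 0) (q2 1), smul (q1 1) (q2 0)}"
      "polyT2p1 2 \<in> hsum_set {smul (q1 0) (q2 2), smul (q1 1) (q2 1)}"
    using q(3) shprod_linear_iff[OF q1_linear, of polyT2p1 q2] by (auto simp: numeral_2_eq_2)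
  with \<open>q2 2 = SZ\<close> have "smul (q1 0) (q2 0) = SP" "smul (q1 1) (q2 1) = SP"
    by (auto simp: polyT2p1_def)
  then have "q2 0 = q1 0" "q2 1 = q1 1" "smul (q1 0) (q1 1) \<noteq> SZ"
    by (auto simp: smul_eq_SP_iff smul_eq_SZ_iff)
  with coeffs(2) show False
    by (simp add: smul_commute[of "q1 (Suc 0)"] polyT2p1_def)
qed

definition sgeom :: "nat \<Rightarrow> nat \<Rightarrow> sgn" where
  "sgeom n = (\<lambda>i. if i < n then SP else SZ)"

definition salt :: "nat \<Rightarrow> nat \<Rightarrow> sgn" where
  "salt n = (\<lambda>i. if i < n then (if even i then SP else SN) else SZ)"

lemma sgeom_spoly [simp]: "sgeom n \<in> spoly"
  by (rule spolyI[of n]) (simp add: sgeom_def)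

lemma salt_spoly [simp]: "salt n \<in> spoly"
  by (rule spolyI[of n]) (simp add: salt_def)

lemma shprod_slinear_SZ:
  assumes "p \<in> spoly" "p 0 = SZ"
  shows "p \<in> shprod (slinear SZ) (\<lambda>i. p (Suc i))"
proof -
  have "p (Suc i) \<in> hsum_set {smul (slinear SZ 0) (p (Suc (Suc i))), smul (slinear SZ 1) (p (Suc i))}"
    for i
    by (cases "p (Suc i)") (auto simp: hsum_set_def slinear_def)
  with assms show ?thesis
    by (subst shprod_linear_iff) (auto simp: slinear_def)
qed

lemma shprod_slinear_SN:
  assumes "p \<in> spoly" "p 0 = SN" "p n = SP" "\<forall>i>n. p i = SZ"
  shows "p \<in> shprod (slinear SN) (sgeom n)"
proof -
  have "0 < n"
    using assms by (cases n) auto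
  moreover have "p (Suc i) \<in> hsum_set {smul (slinear SN 0) (sgeom n (Suc i)), smul (slinear SN 1) (sgeom n i)}"
    for i
    using assms by (cases "Suc i" n rule: linorder_cases) (auto simp: hsum_set_def slinear_def sgeom_def)
  ultimately show ?thesis
    using assms by (subst shprod_linear_iff) (auto simp: slinear_def sgeom_def)
qed

lemma shprod_slinear_SP:
  assumes "p \<in> spoly" "p 0 = SP" "p n = SP" "\<forall>i>n. p i = SZ" "odd n"
  shows "p \<in> shprod (slinear SP) (salt n)"
proof -
  have "0 < n"
    using assms by (cases n) auto
  moreover have "p (Suc i) \<in> hsum_set {smul (slinear SP 0) (salt n (Suc i)), smul (slinear SP 1) (salt n i)}"
    for i
    using assms by (cases "Suc i" n rule: linorder_cases) (auto simp: hsum_set_def slinear_def salt_def)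
  ultimately show ?thesis
    using assms by (subst shprod_linear_iff) (auto simp: slinear_def salt_def)
qed

lemma shprod_sgeom_3:
  assumes "p \<in> spoly" "p 0 = SP" "p n = SP" "\<forall>i>n. p i = SZ" "even n" "4 \<le> n"
  shows "p \<in> shprod (sgeom 3) (salt (n - 1))"
proof -
  have "p (Suc (Suc i)) \<in> hsum_set {salt (n - 1) (Suc (Suc i)), salt (n - 1) (Suc i), salt (n - 1) i}"
    for i
  proof (cases "Suc i" "n - 1" rule: linorder_cases)
    case equal
    with assms have "Suc (Suc i) = n"
      by linarith
    with assms have "even i"
      by auto
    with assms equal show ?thesis
      by (auto simp: hsum_set_def salt_def)
  qed (use assms in \<open>auto simp: hsum_set_def salt_def\<close>)
  with assms show ?thesis
    by (subst shprod_quadratic_iff) (auto simp: sgeom_def salt_def hsum_set_def)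
qed

lemma shprod_slinear_square:
  assumes "p \<in> spoly" "p 0 = SP" "p 1 = s" "p 2 = SP" "\<forall>i>2. p i = SZ" "s \<noteq> SZ"
  shows "p \<in> shprod (slinear s) (slinear s)"
proof -
  have "p (Suc i) \<in> hsum_set {smul (slinear s 0) (slinear s (Suc i)), smul (slinear s 1) (slinear s i)}"
    for i
  proof -
    consider "i = 0" | "i = 1" | "1 < i"
      by linarith
    then show ?thesis
      by cases (use assms in \<open>auto simp: slinear_def smul_commute numeral_2_eq_2\<close>)
  qed
  moreover have "smul s s = SP"
    using assms(6) by (simp add: smul_eq_SP_iff)
  ultimately show ?thesis
    using assms by (subst shprod_linear_iff) (auto simp: slinear_def)
qed

lemma monic_sirred_sdeg_2:
  assumes p: "p \<in> spoly" "smonic p" "sdeg p = 2" "p 0 = SP" "sirred p"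
  shows "p = polyT2p1"
proof -
  have top: "p 2 = SP" "\<forall>i>2. p i = SZ"
    using p coeff_above_sdeg[OF p(1)] by (auto simp: smonic_def)
  have "p 1 = SZ"
  proof (rule ccontr)
    assume "p 1 \<noteq> SZ"
    then have "p \<in> shprod (slinear (p 1)) (slinear (p 1))"
      using shprod_slinear_square[OF p(1,4) refl top] by blast
    then have "\<not> sirred p"
      by (rule not_sirred_if_factors_vanish[OF slinear_spoly slinear_spoly, where n = 2])
        (auto simp: slinear_def top)
    with p show False
      by blast
  qed
  show ?thesis
  proof
    fix i
    consider "i = 0" | "i = 1" | "i = 2" | "2 < (i::nat)"
      by linarith
    then show "p i = polyT2p1 i"
      by cases (use p(4) top \<open>p 1 = SZ\<close> in \<open>auto simp: polyT2p1_def\<close>)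
  qed
qed

lemma monic_sirred_sdeg_ge_2:
  assumes p: "p \<in> spoly" "smonic p" "2 \<le> sdeg p" "sirred p"
  shows "p = polyT2p1"
proof -
  define n where "n = sdeg p"
  have top: "p n = SP" "\<forall>i>n. p i = SZ"
    using p coeff_above_sdeg[OF p(1)] by (auto simp: n_def smonic_def)
  have "2 \<le> n"
    using p by (simp add: n_def)
  have no_lower_factors: "\<not> (q1 n = SZ \<and> q2 n = SZ)"
    if "q1 \<in> spoly" "q2 \<in> spoly" "p \<in> shprod q1 q2" for q1 q2
    using not_sirred_if_factors_vanish[OF that, of n] top p(4) by auto
  show ?thesis
  proof (cases "p 0")
    case SZ
    have shift: "(\<lambda>i. p (Suc i)) \<in> spoly"
      using top by (intro spolyI[of n]) auto
    with \<open>2 \<le> n\<close> top show ?thesis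
      using no_lower_factors[OF slinear_spoly shift shprod_slinear_SZ[OF p(1) SZ]]
      by (auto simp: slinear_def)
  next
    case SN
    with \<open>2 \<le> n\<close> show ?thesis
      using no_lower_factors[OF slinear_spoly sgeom_spoly shprod_slinear_SN[OF p(1) SN top]]
      by (auto simp: slinear_def sgeom_def)
  next
    case SP
    have "4 \<le> n" if "even n" "n \<noteq> 2"
      using that \<open>2 \<le> n\<close> by (auto elim!: evenE)
    then consider "odd n" | "n = 2" | "even n" "4 \<le> n"
      by blast
    then show ?thesis
    proof cases
      case 1
      with \<open>2 \<le> n\<close> show ?thesis
        using no_lower_factors[OF slinear_spoly salt_spoly shprod_slinear_SP[OF p(1) SP top 1]]
        by (auto simp: slinear_def salt_def)
    next
      case 2
      then show ?thesis
        using monic_sirred_sdeg_2 SP p by (simp add: n_def)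
    next
      case 3
      then show ?thesis
        using no_lower_factors[OF sgeom_spoly salt_spoly shprod_sgeom_3[OF p(1) SP top 3]]
        by (auto simp: sgeom_def salt_def split: if_splits)
    qed
  qed
qed

lemma monic_sirred_iff:
  assumes p: "p \<in> spoly" "smonic p"
  shows "sirred p \<longleftrightarrow> p \<in> {polyT, polyTm1, polyTp1, polyT2p1}"
proof
  assume irr: "sirred p"
  then have "1 \<le> sdeg p"
    by (simp add: sirred_def)
  then consider "sdeg p = 1" | "2 \<le> sdeg p"
    by linarith
  then show "p \<in> {polyT, polyTm1, polyTp1, polyT2p1}"
  proof cases
    case 1
    then show ?thesis
      using monic_sdeg_1_eq_slinear[OF p] slinear_cases by (metis insertCI insertE)
  next
    case 2
    then show ?thesis
      using monic_sirred_sdeg_ge_2[OF p _ irr] by simp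
  qed
next
  assume "p \<in> {polyT, polyTm1, polyTp1, polyT2p1}"
  then show "sirred p"
    using sirred_polyT2p1 sirred_sdeg_1[OF slinear_spoly sdeg_slinear]
    by (auto simp: polyT_eq_slinear)
qed

theorem mainTheorem9:
  shows "(\<forall>p\<in>spoly. smonic p \<longrightarrow>
            (sirred p \<longleftrightarrow> p \<in> {polyT, polyTm1, polyTp1, polyT2p1}))
       \<and> (\<forall>p\<in>spoly. sirred p \<longrightarrow>
            (\<exists>a\<in>{SP, SN}. \<exists>m\<in>{polyT, polyTm1, polyTp1, polyT2p1}.
               p = (\<lambda>i. smul a (m i))))"
proof (intro conjI ballI impI)
  fix p assume "p \<in> spoly" "smonic p"
  then show "sirred p \<longleftrightarrow> p \<in> {polyT, polyTm1, polyTp1, polyT2p1}"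
    by (rule monic_sirred_iff)
next
  fix p assume p: "p \<in> spoly" "sirred p"
  then have "p (sdeg p) \<noteq> SZ"
    using lead_coeff_nonzero_if_sdeg_pos sirred_def by blast
  then consider "smonic p" | "smonic (sneg p)"
    unfolding smonic_sneg_iff by (cases "p (sdeg p)") (auto simp: smonic_def)
  then show "\<exists>a\<in>{SP, SN}. \<exists>m\<in>{polyT, polyTm1, polyTp1, polyT2p1}. p = (\<lambda>i. smul a (m i))"
  proof cases
    case 1
    with p have "p \<in> {polyT, polyTm1, polyTp1, polyT2p1}"
      using monic_sirred_iff by blast
    then show ?thesis
      by (intro bexI[of _ SP]) auto
  next
    case 2
    with p have "sneg p \<in> {polyT, polyTm1, polyTp1, polyT2p1}"
      using monic_sirred_iff sneg_spoly sirred_sneg by blast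
    moreover have "p = (\<lambda>i. smul SN (sneg p i))"
      by (simp add: sneg_def)
    ultimately show ?thesis
      by blast
  qed
qed

end
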